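(* Let $I,J$ be disjoint subsets of $\{1,\dots,n\}$ and $I',J'$ disjoint subsets of $\{1,\dots,n\}$, let $a_k\in\mathbb{R}$ for $k\in I\cup J$ and $b_k\in\mathbb{R}$ for $k\in I'\cup J'$, and let $\mathscr H=\{x\in\mathbb{R}_{\max}^n:\bigoplus_{i\in I}a_ix_i\le\bigoplus_{j\in J}a_jx_j\}$, $\mathscr H'=\{x\in\mathbb{R}_{\max}^n:\bigoplus_{i\in I'}b_ix_i\le\bigoplus_{j\in J'}b_jx_j\}$. If $I\neq\emptyset$, then $\mathscr H'\subset\mathscr H$ if and only if $I\subset I'$, $J'\subset J$, and $b_j-b_i\le a_j-a_i$ for all $i\in I$ and $j\in J'$.
   Context: $\mathbb{R}_{\max}=\mathbb{R}\cup\{-\infty\}$ with $a\oplus b=\max(a,b)$ and $ab=a+b$; an empty max-plus sum equals $-\infty$. Thus $\bigoplus_{i\in I}a_ix_i=\max_{i\in I}(a_i+x_i)$. *)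

theory Defs
  imports "HOL-Library.Extended_Real"
begin

text \<open>R_max = real extended by -infinity, modelled inside ereal (value \<infinity> excluded).
  A point of R_max^n is a function on {1..n} with values in R_max, extended by -\<infinity>
  outside {1..n}.\<close>

definition rmax_vec :: "nat \<Rightarrow> (nat \<Rightarrow> ereal) set" where
  "rmax_vec n = {x. \<forall>k. (k \<in> {1..n} \<longrightarrow> x k \<noteq> \<infinity>) \<and> (k \<notin> {1..n} \<longrightarrow> x k = -\<infinity>)}"

text \<open>Max-plus linear form: max over i in I of a_i + x_i; the empty sum is -\<infinity>
  (Sup of the empty set in ereal).\<close>

definition mp_form :: "(nat \<Rightarrow> real) \<Rightarrow> nat set \<Rightarrow> (nat \<Rightarrow> ereal) \<Rightarrow> ereal" where
  "mp_form a I x = (SUP i\<in>I. ereal (a i) + x i)"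

definition tropical_halfspace ::
  "nat \<Rightarrow> nat set \<Rightarrow> nat set \<Rightarrow> (nat \<Rightarrow> real) \<Rightarrow> (nat \<Rightarrow> ereal) set" where
  "tropical_halfspace n I J a = {x \<in> rmax_vec n. mp_form a I x \<le> mp_form a J x}"

end

theory Submission
  imports Defs
begin

text \<open>Sufficiency: from b_i + x_i <= b_j + x_j the hypothesis on the coefficients gives
  a_i + x_i <= a_j + x_j, and the maximum over J' is attained. Necessity is tested on points
  supported on at most two coordinates i in I and j in J', where both max-plus forms are explicit:
  the unit point e_i forces I \<subseteq> I', and the point with x_i = 0, x_j = b_i - b_j lies on the
  boundary of H', which forces j in J and b_j - b_i <= a_j - a_i.\<close>

lemma mp_form_upper: "k \<in> K \<Longrightarrow> ereal (a k) + x k \<le> mp_form a K x"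
  unfolding mp_form_def by (rule SUP_upper) auto

lemma mp_form_least: "(\<And>k. k \<in> K \<Longrightarrow> ereal (a k) + x k \<le> y) \<Longrightarrow> mp_form a K x \<le> y"
  unfolding mp_form_def by (rule SUP_least) auto

lemma mp_form_empty [simp]: "mp_form a {} x = -\<infinity>"
  unfolding mp_form_def by (simp add: bot_ereal_def)

lemma mp_form_attained:
  assumes "finite K" "K \<noteq> {}"
  obtains k where "k \<in> K" "mp_form a K x = ereal (a k) + x k"
proof -
  have "mp_form a K x = Max ((\<lambda>k. ereal (a k) + x k) ` K)"
    unfolding mp_form_def using assms by (simp add: Max_Sup)
  moreover have "Max ((\<lambda>k. ereal (a k) + x k) ` K) \<in> (\<lambda>k. ereal (a k) + x k) ` K"
    using assms by (intro Max_in) auto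
  ultimately show ?thesis using that by auto
qed

lemma mp_form_le_transfer:
  assumes "I \<subseteq> I'" "J' \<subseteq> J" "finite J'"
    and coeff: "\<forall>i\<in>I. \<forall>j\<in>J'. b j - b i \<le> a j - a i"
    and le: "mp_form b I' x \<le> mp_form b J' x"
  shows "mp_form a I x \<le> mp_form a J x"
proof (rule mp_form_least)
  fix i assume i: "i \<in> I"
  have bi: "ereal (b i) + x i \<le> mp_form b J' x"
    using mp_form_upper[of i I' b x] le i \<open>I \<subseteq> I'\<close> by auto
  show "ereal (a i) + x i \<le> mp_form a J x"
  proof (cases "J' = {}")
    case True
    then show ?thesis using bi by (cases "x i") auto
  next
    case False
    then obtain j where j: "j \<in> J'" and max: "mp_form b J' x = ereal (b j) + x j"
      using mp_form_attained \<open>finite J'\<close> by metis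
    have "b j - b i \<le> a j - a i" using coeff i j by blast
    then have "ereal (a i) + x i \<le> ereal (a j) + x j"
      using bi max by (cases "x i"; cases "x j") auto
    also have "\<dots> \<le> mp_form a J x"
      using j \<open>J' \<subseteq> J\<close> by (intro mp_form_upper) auto
    finally show ?thesis .
  qed
qed

definition two_point :: "nat \<Rightarrow> nat \<Rightarrow> ereal \<Rightarrow> nat \<Rightarrow> ereal" where
  "two_point i j t = (\<lambda>k. if k = i then 0 else if k = j then t else -\<infinity>)"

lemma two_point_in_rmax_vec:
  "i \<in> {1..n} \<Longrightarrow> j \<in> {1..n} \<Longrightarrow> t \<noteq> \<infinity> \<Longrightarrow> two_point i j t \<in> rmax_vec n"
  unfolding rmax_vec_def two_point_def by auto

lemma mp_form_two_point:
  "mp_form a K (two_point i j t) =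
     max (if i \<in> K then ereal (a i) else -\<infinity>)
         (if j \<in> K \<and> j \<noteq> i then ereal (a j) + t else -\<infinity>)"
  (is "_ = ?m")
proof (rule antisym)
  show "mp_form a K (two_point i j t) \<le> ?m"
    by (rule mp_form_least) (auto simp: two_point_def)
  show "?m \<le> mp_form a K (two_point i j t)"
    using mp_form_upper[of i K a "two_point i j t"] mp_form_upper[of j K a "two_point i j t"]
    by (auto simp: two_point_def)
qed

lemma tropical_halfspace_subsetD:
  assumes sub: "tropical_halfspace n I' J' b \<subseteq> tropical_halfspace n I J a"
    and "I \<subseteq> {1..n}" "I \<inter> J = {}" "J' \<subseteq> {1..n}" "I' \<inter> J' = {}"
  shows "I \<subseteq> I'" and "\<forall>i\<in>I. \<forall>j\<in>J'. j \<in> J \<and> b j - b i \<le> a j - a i"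
proof -
  have test: "mp_form a I (two_point i j t) \<le> mp_form a J (two_point i j t)"
    if "i \<in> {1..n}" "j \<in> {1..n}" "t \<noteq> \<infinity>"
      "mp_form b I' (two_point i j t) \<le> mp_form b J' (two_point i j t)" for i j t
    using sub two_point_in_rmax_vec[OF that(1-3)] that(4)
    unfolding tropical_halfspace_def by blast
  show "I \<subseteq> I'"
  proof
    fix i assume i: "i \<in> I"
    show "i \<in> I'"
    proof (rule ccontr)
      assume "i \<notin> I'"
      then have "mp_form a I (two_point i i (-\<infinity>)) \<le> mp_form a J (two_point i i (-\<infinity>))"
        using i \<open>I \<subseteq> {1..n}\<close> by (intro test) (auto simp: mp_form_two_point)
      then show False
        using i \<open>I \<inter> J = {}\<close> by (auto simp: mp_form_two_point split: if_splits)
    qed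
  qed
  show "\<forall>i\<in>I. \<forall>j\<in>J'. j \<in> J \<and> b j - b i \<le> a j - a i"
  proof (intro ballI)
    fix i j assume i: "i \<in> I" and j: "j \<in> J'"
    have "i \<in> I'" "j \<notin> I'" "i \<notin> J'" "j \<noteq> i"
      using i j \<open>I \<subseteq> I'\<close> \<open>I' \<inter> J' = {}\<close> by auto
    then have "mp_form a I (two_point i j (b i - b j)) \<le> mp_form a J (two_point i j (b i - b j))"
      using i j \<open>I \<subseteq> {1..n}\<close> \<open>J' \<subseteq> {1..n}\<close> by (intro test) (auto simp: mp_form_two_point)
    then show "j \<in> J \<and> b j - b i \<le> a j - a i"
      using i \<open>j \<noteq> i\<close> \<open>I \<inter> J = {}\<close> by (auto simp: mp_form_two_point split: if_splits)
  qed
qed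

theorem lemma3p2:
  fixes n :: nat and I J I' J' :: "nat set" and a b :: "nat \<Rightarrow> real"
  assumes "I \<subseteq> {1..n}" "J \<subseteq> {1..n}" "I \<inter> J = {}"
    and "I' \<subseteq> {1..n}" "J' \<subseteq> {1..n}" "I' \<inter> J' = {}"
    and "I \<noteq> {}"
  shows "tropical_halfspace n I' J' b \<subseteq> tropical_halfspace n I J a \<longleftrightarrow>
    (I \<subseteq> I' \<and> J' \<subseteq> J \<and> (\<forall>i\<in>I. \<forall>j\<in>J'. b j - b i \<le> a j - a i))"
proof
  assume sub: "tropical_halfspace n I' J' b \<subseteq> tropical_halfspace n I J a"
  note necessary = tropical_halfspace_subsetD[OF sub assms(1,3,5,6)]
  have "J' \<subseteq> J" using necessary(2) \<open>I \<noteq> {}\<close> by blast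
  with necessary show "I \<subseteq> I' \<and> J' \<subseteq> J \<and> (\<forall>i\<in>I. \<forall>j\<in>J'. b j - b i \<le> a j - a i)"
    by blast
next
  assume "I \<subseteq> I' \<and> J' \<subseteq> J \<and> (\<forall>i\<in>I. \<forall>j\<in>J'. b j - b i \<le> a j - a i)"
  moreover have "finite J'" using \<open>J' \<subseteq> {1..n}\<close> finite_subset by blast
  ultimately show "tropical_halfspace n I' J' b \<subseteq> tropical_halfspace n I J a"
    unfolding tropical_halfspace_def by (auto intro: mp_form_le_transfer)
qed

end
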